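(* Let $\alpha$, $F_\alpha$ and $L_\alpha$ be as in the context. The jump transformation $F^*_\alpha$ of $F_\alpha$ with respect to $A_1$, defined by $F_\alpha^*(x):=F_\alpha^{\rho_\alpha(x)}(x)$ where $\rho_\alpha(x):=\inf\{n\ge0:F_\alpha^n(x)\in A_1\}+1$, coincides with $L_\alpha$ (on $\mathcal U\setminus\{0\}$, where $\rho_\alpha$ is finite).
   Context: Let $\mathcal U=[0,1]$. $\alpha=\{A_n:n\in\mathbb N\}$ is a countable partition of $\mathcal U$ (up to the point $0$) into left-open, right-closed intervals of positive length, ordered from right to left starting with $A_1$, accumulating only at $0$; $a_n$ is the length of $A_n$ and $t_n:=\sum_{k\ge n}a_k$, so $A_n=(t_{n+1},t_n]$. The $\alpha$-Farey map is $F_\alpha(x)=(1-x)/a_1$ on $A_1$, $F_\alpha(x)=a_{n-1}(x-t_{n+1})/a_n+t_n$ on $A_n$ ($n\ge2$), $F_\alpha(0)=0$. The $\alpha$-Lüroth map is $L_\alpha(x)=(t_n-x)/a_n$ on $A_n$, $L_\alpha(0)=0$. *)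

theory Defs
  imports "HOL-Analysis.Analysis"
begin

text \<open>A partition alpha is encoded by the sequence of lengths a 1, a 2, ...
  (index 0 is unused).  It is admissible if all lengths are positive,
  summable, and sum to 1.\<close>

definition admissible_partition :: "(nat \<Rightarrow> real) \<Rightarrow> bool" where
  "admissible_partition a \<longleftrightarrow>
     (\<forall>n\<ge>1. a n > 0) \<and> summable a \<and> (\<Sum>k. a (k + 1)) = 1"

definition tail :: "(nat \<Rightarrow> real) \<Rightarrow> nat \<Rightarrow> real" where
  "tail a n = (\<Sum>k. a (k + n))"

definition part :: "(nat \<Rightarrow> real) \<Rightarrow> nat \<Rightarrow> real set" where
  "part a n = {tail a (Suc n) <.. tail a n}"

definition part_index :: "(nat \<Rightarrow> real) \<Rightarrow> real \<Rightarrow> nat" where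
  "part_index a x = (THE n. n \<ge> 1 \<and> x \<in> part a n)"

definition farey :: "(nat \<Rightarrow> real) \<Rightarrow> real \<Rightarrow> real" where
  "farey a x =
     (if x = 0 then 0
      else let n = part_index a x in
        if n = 1 then (1 - x) / a 1
        else a (n - 1) * (x - tail a (n + 1)) / a n + tail a n)"

definition luroth :: "(nat \<Rightarrow> real) \<Rightarrow> real \<Rightarrow> real" where
  "luroth a x =
     (if x = 0 then 0
      else let n = part_index a x in (tail a n - x) / a n)"

definition first_return :: "(nat \<Rightarrow> real) \<Rightarrow> real \<Rightarrow> nat" where
  "first_return a x = Inf {n. (farey a ^^ n) x \<in> part a 1} + 1"

definition jump_farey :: "(nat \<Rightarrow> real) \<Rightarrow> real \<Rightarrow> real" where
  "jump_farey a x = (farey a ^^ first_return a x) x"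

end

theory Submission
  imports Defs
begin

text \<open>On \<open>A\<^sub>n\<close>, \<open>n \<ge> 2\<close>, the Farey map is the increasing affine bijection onto \<open>A\<^sub>n\<^sub>-\<^sub>1\<close>, so it
  preserves the relative position \<open>(x - t\<^sub>n\<^sub>+\<^sub>1) / a\<^sub>n\<close> of a point inside its interval.  Hence a point
  of \<open>A\<^sub>n\<close> first enters \<open>A\<^sub>1\<close> after exactly \<open>n - 1\<close> steps, at the point \<open>y\<close> with the same relative
  position \<open>r\<close>, and one further step gives \<open>(1 - y) / a\<^sub>1 = 1 - r = (t\<^sub>n - x) / a\<^sub>n\<close>.\<close>

lemma tail_eq_suminf_diff: "summable a \<Longrightarrow> tail a n = suminf a - (\<Sum>i<n. a i)"
  unfolding tail_def by (rule suminf_minus_initial_segment)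

lemma tail_Suc_eq: "summable a \<Longrightarrow> tail a n = a n + tail a (Suc n)"
  by (simp add: tail_eq_suminf_diff)

lemma tail_tendsto_zero: "summable a \<Longrightarrow> tail a \<longlonglongrightarrow> 0"
proof -
  assume "summable a"
  then have "(\<lambda>n. suminf a - (\<Sum>i<n. a i)) \<longlonglongrightarrow> suminf a - suminf a"
    by (intro tendsto_diff tendsto_const summable_LIMSEQ)
  moreover have "tail a = (\<lambda>n. suminf a - (\<Sum>i<n. a i))"
    using tail_eq_suminf_diff[OF \<open>summable a\<close>] by blast
  ultimately show ?thesis by simp
qed

context
  fixes a :: "nat \<Rightarrow> real"
  assumes adm: "admissible_partition a"
begin

lemma admissible_pos: "1 \<le> n \<Longrightarrow> 0 < a n"
  using adm unfolding admissible_partition_def by auto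

lemma admissible_summable: "summable a"
  using adm unfolding admissible_partition_def by auto

lemma tail_one: "tail a 1 = 1"
  using adm unfolding admissible_partition_def tail_def by auto

lemma tail_Suc: "tail a n = a n + tail a (Suc n)"
  using tail_Suc_eq[OF admissible_summable] .

lemma tail_pos: "1 \<le> n \<Longrightarrow> 0 < tail a n"
  unfolding tail_def
  by (rule suminf_pos) (auto intro: admissible_pos simp: summable_iff_shift admissible_summable)

lemma tail_strict_decreasing: "1 \<le> m \<Longrightarrow> m < n \<Longrightarrow> tail a n < tail a m"
proof (induction n rule: less_induct)
  case (less n)
  then obtain k where n: "n = Suc k" by (cases n) auto
  have "tail a n < tail a k" using tail_Suc[of k] admissible_pos[of k] less n by simp
  moreover have "tail a k < tail a m" if "m \<noteq> k"
    using less.IH[of k] less.prems n that by simp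
  ultimately show ?case by (cases "m = k") auto
qed

lemma part_pos: "1 \<le> n \<Longrightarrow> x \<in> part a n \<Longrightarrow> 0 < x"
  using tail_pos[of "Suc n"] unfolding part_def by auto

lemma part_unique:
  assumes "1 \<le> m" "1 \<le> n" "x \<in> part a m" "x \<in> part a n"
  shows "m = n"
proof -
  have False if "1 \<le> p" "p < q" "x \<in> part a p" "x \<in> part a q" for p q
    using that tail_strict_decreasing[of "Suc p" q] unfolding part_def by (cases "Suc p = q") auto
  then show ?thesis using assms by (metis linorder_neqE_nat)
qed

lemma part_index_eqI: "1 \<le> n \<Longrightarrow> x \<in> part a n \<Longrightarrow> part_index a x = n"
  unfolding part_index_def by (rule the_equality) (use part_unique in blast)+

lemma part_exists:
  assumes "0 < x" "x \<le> 1"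
  shows "\<exists>n\<ge>1. x \<in> part a n"
proof -
  obtain m0 where "\<And>m. m0 \<le> m \<Longrightarrow> tail a m < x"
    using order_tendstoD(2)[OF tail_tendsto_zero[OF admissible_summable] \<open>0 < x\<close>]
    by (auto simp: eventually_sequentially)
  then have ex: "\<exists>m. tail a m < x \<and> 1 \<le> m" by (metis le_add2 add.commute)
  define m where "m = (LEAST m. tail a m < x \<and> 1 \<le> m)"
  have m: "tail a m < x" "1 \<le> m" using LeastI_ex[OF ex] unfolding m_def by auto
  moreover have "m \<noteq> 1" using m tail_one assms by auto
  ultimately obtain n where n: "m = Suc n" "1 \<le> n" by (cases m) auto
  have "\<not> (tail a n < x \<and> 1 \<le> n)"
    using not_less_Least[of n "\<lambda>m. tail a m < x \<and> 1 \<le> m"] n unfolding m_def by auto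
  then show ?thesis using n m unfolding part_def by auto
qed

lemma part_iff_relative_position:
  "1 \<le> n \<Longrightarrow> x \<in> part a n \<longleftrightarrow> 0 < (x - tail a (Suc n)) / a n \<and> (x - tail a (Suc n)) / a n \<le> 1"
  using admissible_pos[of n] tail_Suc[of n] unfolding part_def by (auto simp: field_simps)

lemma farey_part_one: "x \<in> part a 1 \<Longrightarrow> farey a x = (1 - x) / a 1"
  using part_pos[of 1 x] part_index_eqI[of 1 x] unfolding farey_def by simp

lemma luroth_part: "1 \<le> n \<Longrightarrow> x \<in> part a n \<Longrightarrow> luroth a x = (tail a n - x) / a n"
  using part_pos[of n x] part_index_eqI[of n x] unfolding luroth_def by simp

lemma farey_part_Suc:
  assumes "1 \<le> m" and x: "x \<in> part a (Suc m)"
  shows "farey a x \<in> part a m"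
    and "(farey a x - tail a (Suc m)) / a m = (x - tail a (Suc (Suc m))) / a (Suc m)"
proof -
  have "farey a x = a m * (x - tail a (Suc (Suc m))) / a (Suc m) + tail a (Suc m)"
    using part_pos[of "Suc m" x] part_index_eqI[of "Suc m" x] x \<open>1 \<le> m\<close>
    unfolding farey_def by (simp add: Let_def)
  then show relpos: "(farey a x - tail a (Suc m)) / a m = (x - tail a (Suc (Suc m))) / a (Suc m)"
    using admissible_pos[of m] \<open>1 \<le> m\<close> by simp
  show "farey a x \<in> part a m"
    using x \<open>1 \<le> m\<close> unfolding part_iff_relative_position[OF \<open>1 \<le> m\<close>] relpos
    by (simp add: part_iff_relative_position)
qed

lemma farey_funpow_part:
  assumes "1 \<le> m" "x \<in> part a (m + j)"
  shows "(farey a ^^ j) x \<in> part a m \<and>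
    ((farey a ^^ j) x - tail a (Suc m)) / a m = (x - tail a (Suc (m + j))) / a (m + j)"
  using assms(2)
proof (induction j arbitrary: x)
  case (Suc j)
  have "1 \<le> m + j" "x \<in> part a (Suc (m + j))" using Suc.prems assms(1) by auto
  note step = farey_part_Suc[OF this]
  show ?case using Suc.IH[OF step(1)] step(2) by (simp add: funpow_Suc_right del: funpow.simps)
qed simp

lemma first_entry_part_one:
  assumes "x \<in> part a (Suc k)"
  shows "Inf {j. (farey a ^^ j) x \<in> part a 1} = k"
proof -
  have "(farey a ^^ j) x \<notin> part a 1" if "j < k" for j
  proof
    assume "(farey a ^^ j) x \<in> part a 1"
    moreover have "(farey a ^^ j) x \<in> part a (Suc k - j)"
      using farey_funpow_part[of "Suc k - j" x j] assms \<open>j < k\<close> by simp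
    ultimately have "1 = Suc k - j"
      using part_unique[of 1 "Suc k - j" "(farey a ^^ j) x"] \<open>j < k\<close> by simp
    then show False using \<open>j < k\<close> by simp
  qed
  moreover have "(farey a ^^ k) x \<in> part a 1"
    using farey_funpow_part[of 1 x k] assms by simp
  ultimately show ?thesis
    unfolding Inf_nat_def by (intro Least_equality) (auto simp: not_less[symmetric])
qed

end


theorem lemma2p1:
  fixes a :: "nat \<Rightarrow> real" and x :: real
  assumes "admissible_partition a"
    and "x \<in> {0<..1}"
  shows "{n. (farey a ^^ n) x \<in> part a 1} \<noteq> {} \<and> jump_farey a x = luroth a x"
proof -
  note adm = assms(1)
  obtain k where x: "x \<in> part a (Suc k)"
    using part_exists[OF adm, of x] assms(2) by (auto dest: Suc_le_D)
  define y where "y = (farey a ^^ k) x"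
  have y: "y \<in> part a 1" "(y - tail a 2) / a 1 = (x - tail a (Suc (Suc k))) / a (Suc k)"
    using farey_funpow_part[OF adm, of 1 x k] x by (simp_all add: y_def numeral_2_eq_2)
  have "jump_farey a x = (1 - y) / a 1"
    unfolding jump_farey_def first_return_def first_entry_part_one[OF adm x]
    using farey_part_one[OF adm y(1)] by (simp add: y_def)
  also have "\<dots> = 1 - (y - tail a 2) / a 1"
    using tail_one[OF adm] tail_Suc[OF adm, of 1] admissible_pos[OF adm, of 1]
    by (simp add: numeral_2_eq_2 field_simps)
  also have "\<dots> = (tail a (Suc k) - x) / a (Suc k)"
    using y(2) tail_Suc[OF adm, of "Suc k"] admissible_pos[OF adm, of "Suc k"]
    by (simp add: field_simps)
  also have "\<dots> = luroth a x"
    using luroth_part[OF adm _ x] by simp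
  finally show ?thesis using y(1) y_def by auto
qed

end
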